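(* Let $(R,\cdot,\mathfrak e)$ be a partial $A$-module algebra. Then the product of the smash product $R\#A$ is left nondegenerate: if $\xi\in R\#A$ satisfies $(x\#a)\xi=0$ for all $x\in R$ and $a\in A$, then $\xi=0$.
   Context: $\Bbbk$ is a field; $M(R)$ is the multiplier algebra of an algebra $R$ with nondegenerate product. $A$ is a regular multiplier Hopf algebra with comultiplication $\Delta$, counit $\varepsilon$, bijective antipode $S$. A partial $A$-module algebra is a triple $(R,\cdot,\mathfrak e)$, $\cdot:A\otimes R\to R$ and $\mathfrak e:A\to M(R)$ linear, such that for all $a,b\in A$, $x,y\in R$: (i) $a\cdot(x(b\cdot y))=(a_{(1)}\cdot x)(a_{(2)}b\cdot y)$; (ii) $\mathfrak e(a)(b\cdot x)=a_{(1)}\cdot(S(a_{(2)})b\cdot x)$ and $\mathfrak e(A)R\subseteq A\cdot R$; (iii) given $a_1,\dots,a_n\in A$, $x_1,\dots,x_m\in R$ there is $b\in A$ with $a_ib=a_i=ba_i$ and $a_i\cdot x_j=a_i\cdot(b\cdot x_j)$; (iv) $A\cdot x=0$ implies $x=0$. The smash product $R\#A$ is the vector space $R\otimes A$ with product $(x\#a)(y\#b)=x(a_{(1)}\cdot y)\#a_{(2)}b$. *)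

theory Defs
  imports Complex_Main
begin

definition k_algebra :: "('k::field \<Rightarrow> 'a::ring \<Rightarrow> 'a) \<Rightarrow> bool" where
  "k_algebra s \<longleftrightarrow> vector_space s \<and>
     (\<forall>c x y. s c (x * y) = s c x * y \<and> s c (x * y) = x * s c y)"

definition nondeg_product :: "('a::ring) itself \<Rightarrow> bool" where
  "nondeg_product _ \<longleftrightarrow>
     (\<forall>a::'a. (\<forall>b. a * b = 0) \<longrightarrow> a = 0) \<and> (\<forall>a::'a. (\<forall>b. b * a = 0) \<longrightarrow> a = 0)"

text \<open>An element of V \<otimes> W is represented by a finite list of pairs (v,w),
 standing for the sum of the elementary tensors v \<otimes> w (scalars are absorbed into
 the first factor). Two representatives are equal in V \<otimes> W iff every bilinear form
 takes the same value on them (over a field, linear functionals separate points of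
 V \<otimes> W, and these are exactly the bilinear forms on V \<times> W).\<close>

definition bilinear_form ::
  "('k::field \<Rightarrow> 'b::ab_group_add \<Rightarrow> 'b) \<Rightarrow> ('k \<Rightarrow> 'c::ab_group_add \<Rightarrow> 'c) \<Rightarrow> ('b \<Rightarrow> 'c \<Rightarrow> 'k) \<Rightarrow> bool" where
  "bilinear_form s1 s2 B \<longleftrightarrow>
     (\<forall>y. Vector_Spaces.linear s1 (*) (\<lambda>x. B x y)) \<and> (\<forall>x. Vector_Spaces.linear s2 (*) (B x))"

definition tensor_eq ::
  "('k::field \<Rightarrow> 'b::ab_group_add \<Rightarrow> 'b) \<Rightarrow> ('k \<Rightarrow> 'c::ab_group_add \<Rightarrow> 'c)
    \<Rightarrow> ('b \<times> 'c) list \<Rightarrow> ('b \<times> 'c) list \<Rightarrow> bool" where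
  "tensor_eq s1 s2 t u \<longleftrightarrow> (\<forall>B. bilinear_form s1 s2 B \<longrightarrow>
      (\<Sum>(x,y)\<leftarrow>t. B x y) = (\<Sum>(x,y)\<leftarrow>u. B x y))"

definition trilinear_form ::
  "('k::field \<Rightarrow> 'b::ab_group_add \<Rightarrow> 'b) \<Rightarrow> ('b \<Rightarrow> 'b \<Rightarrow> 'b \<Rightarrow> 'k) \<Rightarrow> bool" where
  "trilinear_form s B \<longleftrightarrow>
     (\<forall>y z. Vector_Spaces.linear s (*) (\<lambda>x. B x y z)) \<and>
     (\<forall>x z. Vector_Spaces.linear s (*) (\<lambda>y. B x y z)) \<and>
     (\<forall>x y. Vector_Spaces.linear s (*) (\<lambda>z. B x y z))"

definition tensor3_eq ::
  "('k::field \<Rightarrow> 'b::ab_group_add \<Rightarrow> 'b) \<Rightarrow> ('b \<times> 'b \<times> 'b) list \<Rightarrow> ('b \<times> 'b \<times> 'b) list \<Rightarrow> bool" where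
  "tensor3_eq s t u \<longleftrightarrow> (\<forall>B. trilinear_form s B \<longrightarrow>
      (\<Sum>(x,y,z)\<leftarrow>t. B x y z) = (\<Sum>(x,y,z)\<leftarrow>u. B x y z))"

definition tmult :: "('a::ring \<times> 'a) list \<Rightarrow> ('a \<times> 'a) list \<Rightarrow> ('a \<times> 'a) list" where
  "tmult t u = concat (map (\<lambda>(p,q). map (\<lambda>(p',q'). (p * p', q * q')) u) t)"

text \<open>The comultiplication \<Delta> : A \<rightarrow> M(A \<otimes> A) is given by two maps:
 DL a t = \<Delta>(a) t and DR a t = t \<Delta>(a) for t \<in> A \<otimes> A (a multiplier being a pair
 (L,R) with L(tu) = L(t)u, R(tu) = tR(u), tL(u) = R(t)u).\<close>

definition is_multiplier ::
  "('k::field \<Rightarrow> 'a::ring \<Rightarrow> 'a) \<Rightarrow> (('a \<times> 'a) list \<Rightarrow> ('a \<times> 'a) list) \<Rightarrow> (('a \<times> 'a) list \<Rightarrow> ('a \<times> 'a) list) \<Rightarrow> bool" where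
  "is_multiplier s L R \<longleftrightarrow> (\<forall>t u.
      tensor_eq s s (L (tmult t u)) (tmult (L t) u) \<and>
      tensor_eq s s (R (tmult t u)) (tmult t (R u)) \<and>
      tensor_eq s s (tmult t (L u)) (tmult (R t) u))"

definition lm1b :: "'a::ring \<Rightarrow> ('a \<times> 'a) list \<Rightarrow> ('a \<times> 'a) list" where
  "lm1b b t = map (\<lambda>(p,q). (p, b * q)) t"
definition lmb1 :: "'a::ring \<Rightarrow> ('a \<times> 'a) list \<Rightarrow> ('a \<times> 'a) list" where
  "lmb1 b t = map (\<lambda>(p,q). (b * p, q)) t"
definition rm1b :: "'a::ring \<Rightarrow> ('a \<times> 'a) list \<Rightarrow> ('a \<times> 'a) list" where
  "rm1b b t = map (\<lambda>(p,q). (p, q * b)) t"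
definition rmb1 :: "'a::ring \<Rightarrow> ('a \<times> 'a) list \<Rightarrow> ('a \<times> 'a) list" where
  "rmb1 b t = map (\<lambda>(p,q). (p * b, q)) t"

text \<open>Representatives of \<Delta>(a)(1\<otimes>b), (a\<otimes>1)\<Delta>(b), \<Delta>(a)(b\<otimes>1), (1\<otimes>a)\<Delta>(b) in A \<otimes> A
 (a multiplier m lies in A \<otimes> A iff there is u with m t = u t for all t).\<close>
definition D_1b where
  "D_1b s DL a b = (SOME u. \<forall>t. tensor_eq s s (DL a (lm1b b t)) (tmult u t))"
definition D_a1 where
  "D_a1 s DR a b = (SOME u. \<forall>t. tensor_eq s s (DR b (rmb1 a t)) (tmult t u))"
definition D_b1 where
  "D_b1 s DL a b = (SOME u. \<forall>t. tensor_eq s s (DL a (lmb1 b t)) (tmult u t))"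
definition D_1a where
  "D_1a s DR a b = (SOME u. \<forall>t. tensor_eq s s (DR b (rm1b a t)) (tmult t u))"

text \<open>Bijectivity of a bilinear map T : A \<times> A \<rightarrow> A \<otimes> A viewed as a linear map
 A \<otimes> A \<rightarrow> A \<otimes> A.\<close>
definition text_map :: "('a \<Rightarrow> 'a \<Rightarrow> ('a \<times> 'a) list) \<Rightarrow> ('a \<times> 'a) list \<Rightarrow> ('a \<times> 'a) list" where
  "text_map T t = concat (map (\<lambda>(p,q). T p q) t)"

definition tensor_bij :: "('k::field \<Rightarrow> 'a::ring \<Rightarrow> 'a) \<Rightarrow> ('a \<Rightarrow> 'a \<Rightarrow> ('a \<times> 'a) list) \<Rightarrow> bool" where
  "tensor_bij s T \<longleftrightarrow>
     (\<forall>t. tensor_eq s s (text_map T t) [] \<longrightarrow> tensor_eq s s t []) \<and>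
     (\<forall>u. \<exists>t. tensor_eq s s (text_map T t) u)"

definition reg_mult_hopf ::
  "('k::field \<Rightarrow> 'a::ring \<Rightarrow> 'a) \<Rightarrow> ('a \<Rightarrow> ('a \<times> 'a) list \<Rightarrow> ('a \<times> 'a) list)
    \<Rightarrow> ('a \<Rightarrow> ('a \<times> 'a) list \<Rightarrow> ('a \<times> 'a) list) \<Rightarrow> ('a \<Rightarrow> 'k) \<Rightarrow> ('a \<Rightarrow> 'a) \<Rightarrow> bool" where
  "reg_mult_hopf s DL DR eps S \<longleftrightarrow>
     k_algebra s \<and> nondeg_product TYPE('a) \<and>
     \<comment> \<open>\<Delta>(a) is a multiplier of A \<otimes> A\<close>
     (\<forall>a. is_multiplier s (DL a) (DR a)) \<and>
     \<comment> \<open>\<Delta> is linear\<close>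
     (\<forall>a b t. tensor_eq s s (DL (a + b) t) (DL a t @ DL b t) \<and>
              tensor_eq s s (DR (a + b) t) (DR a t @ DR b t)) \<and>
     (\<forall>c a t. tensor_eq s s (DL (s c a) t) (map (\<lambda>(p,q). (s c p, q)) (DL a t)) \<and>
              tensor_eq s s (DR (s c a) t) (map (\<lambda>(p,q). (s c p, q)) (DR a t))) \<and>
     \<comment> \<open>\<Delta> is multiplicative\<close>
     (\<forall>a b t. tensor_eq s s (DL (a * b) t) (DL a (DL b t)) \<and>
              tensor_eq s s (DR (a * b) t) (DR b (DR a t))) \<and>
     \<comment> \<open>\<Delta>(a)(1\<otimes>b), (a\<otimes>1)\<Delta>(b), \<Delta>(a)(b\<otimes>1), (1\<otimes>a)\<Delta>(b) lie in A \<otimes> A\<close>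
     (\<forall>a b. \<exists>u. \<forall>t. tensor_eq s s (DL a (lm1b b t)) (tmult u t)) \<and>
     (\<forall>a b. \<exists>u. \<forall>t. tensor_eq s s (DR b (rmb1 a t)) (tmult t u)) \<and>
     (\<forall>a b. \<exists>u. \<forall>t. tensor_eq s s (DL a (lmb1 b t)) (tmult u t)) \<and>
     (\<forall>a b. \<exists>u. \<forall>t. tensor_eq s s (DR b (rm1b a t)) (tmult t u)) \<and>
     \<comment> \<open>coassociativity: (a\<otimes>1\<otimes>1)(\<Delta>\<otimes>\<iota>)(\<Delta>(b)(1\<otimes>c)) = (\<iota>\<otimes>\<Delta>)((a\<otimes>1)\<Delta>(b))(1\<otimes>1\<otimes>c)\<close>
     (\<forall>a b c. tensor3_eq s
        (concat (map (\<lambda>(p,q). map (\<lambda>(u,v). (u,v,q)) (D_a1 s DR a p)) (D_1b s DL b c)))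
        (concat (map (\<lambda>(r,q). map (\<lambda>(u,v). (r,u,v)) (D_1b s DL q c)) (D_a1 s DR a b)))) \<and>
     \<comment> \<open>the maps T1, T2 (multiplier Hopf algebra) and T3, T4 (regularity, i.e. for \<Delta>^op) are bijective\<close>
     tensor_bij s (D_1b s DL) \<and> tensor_bij s (D_a1 s DR) \<and>
     tensor_bij s (D_b1 s DL) \<and> tensor_bij s (D_1a s DR) \<and>
     \<comment> \<open>counit\<close>
     Vector_Spaces.linear s (*) eps \<and>
     (\<forall>a b. (\<Sum>(p,q)\<leftarrow>D_1b s DL a b. s (eps p) q) = a * b) \<and>
     (\<forall>a b. (\<Sum>(p,q)\<leftarrow>D_a1 s DR a b. s (eps q) p) = a * b) \<and>
     \<comment> \<open>antipode\<close>
     Vector_Spaces.linear s s S \<and>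
     (\<forall>a b. (\<Sum>(p,q)\<leftarrow>D_1b s DL a b. S p * q) = s (eps a) b) \<and>
     (\<forall>a b. (\<Sum>(p,q)\<leftarrow>D_a1 s DR a b. p * S q) = s (eps b) a) \<and>
     bij S"

text \<open>The map \<e> : A \<rightarrow> M(R) is given by eL a x = \<e>(a) x and eR a x = x \<e>(a).\<close>

definition partial_module_algebra ::
  "('k::field \<Rightarrow> 'a::ring \<Rightarrow> 'a) \<Rightarrow> ('a \<Rightarrow> ('a \<times> 'a) list \<Rightarrow> ('a \<times> 'a) list)
    \<Rightarrow> ('a \<Rightarrow> ('a \<times> 'a) list \<Rightarrow> ('a \<times> 'a) list) \<Rightarrow> ('a \<Rightarrow> 'a)
    \<Rightarrow> ('k \<Rightarrow> 'r::ring \<Rightarrow> 'r) \<Rightarrow> ('a \<Rightarrow> 'r \<Rightarrow> 'r)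
    \<Rightarrow> ('a \<Rightarrow> 'r \<Rightarrow> 'r) \<Rightarrow> ('a \<Rightarrow> 'r \<Rightarrow> 'r) \<Rightarrow> bool" where
  "partial_module_algebra sA DL DR S sR act eL eR \<longleftrightarrow>
     \<comment> \<open>\<cdot> : A \<otimes> R \<rightarrow> R linear, i.e. bilinear in (a,x)\<close>
     (\<forall>x. Vector_Spaces.linear sA sR (\<lambda>a. act a x)) \<and>
     (\<forall>a. Vector_Spaces.linear sR sR (act a)) \<and>
     \<comment> \<open>\<e> : A \<rightarrow> M(R) linear\<close>
     (\<forall>a x y. eL a (x * y) = eL a x * y \<and> eR a (x * y) = x * eR a y \<and>
              x * eL a y = eR a x * y) \<and>
     (\<forall>x. Vector_Spaces.linear sA sR (\<lambda>a. eL a x) \<and> Vector_Spaces.linear sA sR (\<lambda>a. eR a x)) \<and>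
     \<comment> \<open>(i)\<close>
     (\<forall>a b x y. act a (x * act b y) = (\<Sum>(p,q)\<leftarrow>D_1b sA DL a b. act p x * act q y)) \<and>
     \<comment> \<open>(ii) \<e>(a)(b\<cdot>x) = a_(1)\<cdot>(S(a_(2))b\<cdot>x), where a_(1)\<otimes>S(a_(2))b = (\<iota>\<otimes>S)((1\<otimes>S^-1(b))\<Delta>(a))\<close>
     (\<forall>a b x. eL a (act b x) = (\<Sum>(p,q)\<leftarrow>D_1a sA DR (inv S b) a. act p (act (S q) x))) \<and>
     (\<forall>a x. eL a x \<in> module.span sR {act b y | b y. True}) \<and>
     \<comment> \<open>(iii)\<close>
     (\<forall>As Xs. finite As \<longrightarrow> finite Xs \<longrightarrow>
        (\<exists>b. \<forall>a\<in>As. a * b = a \<and> b * a = a \<and> (\<forall>x\<in>Xs. act a x = act a (act b x)))) \<and>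
     \<comment> \<open>(iv)\<close>
     (\<forall>x. (\<forall>a. act a x = 0) \<longrightarrow> x = 0)"

text \<open>Product on R # A = R \<otimes> A: (x#a)(y#b) = x(a_(1)\<cdot>y) # a_(2)b, where
 a_(1)\<otimes>a_(2)b = \<Delta>(a)(1\<otimes>b); extended bilinearly to formal sums.\<close>
definition smash_mult ::
  "('k::field \<Rightarrow> 'a::ring \<Rightarrow> 'a) \<Rightarrow> ('a \<Rightarrow> ('a \<times> 'a) list \<Rightarrow> ('a \<times> 'a) list)
    \<Rightarrow> ('a \<Rightarrow> 'r::ring \<Rightarrow> 'r) \<Rightarrow> ('r \<times> 'a) list \<Rightarrow> ('r \<times> 'a) list \<Rightarrow> ('r \<times> 'a) list" where
  "smash_mult sA DL act u v = concat (map (\<lambda>((x,a),(y,b)).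
      map (\<lambda>(p,q). (x * act p y, q)) (D_1b sA DL a b)) (List.product u v))"

end

theory Submission
  imports Defs
begin

text \<open>Pair the hypothesis with a bilinear form \<open>B\<close> on \<open>R \<times> A\<close>: it says \<open>\<Sum> B(x (a'\<cdot>y), a'') = 0\<close>
  for all \<open>x\<close>, \<open>a\<close>, summing over \<open>\<xi> = \<Sum> y \<otimes> b\<close> and \<open>\<Delta>(a)(1 \<otimes> b) = \<Sum> a' \<otimes> a''\<close>.
  Since \<open>(1 \<otimes> c)\<Delta>(a)(1 \<otimes> b)\<close> may be bracketed either way, the bilinear form
  \<open>(p, q) \<mapsto> \<Sum> B(x (p\<cdot>y), q b)\<close> on \<open>A \<times> A\<close> vanishes on every \<open>(1 \<otimes> c)\<Delta>(a)\<close>. By regularity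
  these span \<open>A \<otimes> A\<close>, so the form vanishes identically, and taking for \<open>q\<close> a local unit for the
  \<open>b\<close>'s gives \<open>\<Sum> B(x (e\<cdot>y), b) = 0\<close>. For a linear functional \<open>\<psi>\<close> on \<open>A\<close> this means
  \<open>x (e\<cdot>v) = 0\<close> for all \<open>x\<close>, \<open>e\<close>, where \<open>v = \<Sum> \<psi>(b) y\<close>; nondegeneracy of \<open>R\<close> and axiom (iv)
  give \<open>v = 0\<close>, and these slices \<open>(\<iota> \<otimes> \<psi>)\<xi>\<close> determine \<open>\<xi>\<close>.\<close>

lemmas linear_apply_add = module_hom.add[OF module_hom_linearI]
lemmas linear_apply_scale = module_hom.scale[OF module_hom_linearI]
lemmas linear_apply_zero = module_hom.zero[OF module_hom_linearI]
lemmas linear_apply_sum = module_hom.sum[OF module_hom_linearI]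

lemma linear_compose_apply:
  "Vector_Spaces.linear s1 s2 f \<Longrightarrow> Vector_Spaces.linear s2 s3 g \<Longrightarrow>
    Vector_Spaces.linear s1 s3 (\<lambda>x. g (f x))"
  using Vector_Spaces.linear_compose[of s1 s2 f s3 g] by (simp add: o_def)

lemma vector_space_field_mult: "vector_space ((*) :: 'k::field \<Rightarrow> 'k \<Rightarrow> 'k)"
  by unfold_locales (auto simp: algebra_simps)

lemma linear_apply_sum_list:
  "Vector_Spaces.linear s1 s2 f \<Longrightarrow> f (\<Sum>z\<leftarrow>xs. h z) = (\<Sum>z\<leftarrow>xs. f (h z))"
  by (induction xs) (auto simp: linear_apply_add linear_apply_zero)

lemma linear_sum_list:
  assumes "vector_space s1" "vector_space s2"
    and "\<And>z. z \<in> set xs \<Longrightarrow> Vector_Spaces.linear s1 s2 (F z)"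
  shows "Vector_Spaces.linear s1 s2 (\<lambda>p. \<Sum>z\<leftarrow>xs. F z p)"
proof -
  interpret vector_space_pair s1 s2
    using assms(1,2) by (simp add: vector_space_pair_def)
  show ?thesis
    using assms(3) by (induction xs) (simp_all add: linear_zero linear_compose_add)
qed

lemma (in vector_space) exists_functional_nonzero:
  assumes "v \<noteq> 0"
  shows "\<exists>\<phi>. Vector_Spaces.linear scale (*) \<phi> \<and> \<phi> v \<noteq> 0"
proof -
  have "independent {v}" using assms by simp
  let ?B = "extend_basis {v}"
  have "independent ?B" "span ?B = UNIV" "v \<in> ?B"
    using \<open>independent {v}\<close> independent_extend_basis span_extend_basis extend_basis_superset
    by blast+
  then show ?thesis
    by (intro exI[of _ "\<lambda>w. representation ?B w v"])
      (simp add: linear_representation representation_basis)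
qed

lemma sum_list_concat_map:
  "(\<Sum>z\<leftarrow>concat (map g t). h z) = (\<Sum>w\<leftarrow>t. \<Sum>z\<leftarrow>g w. h z)"
  by (induction t) auto

lemma sum_list_swap:
  "(\<Sum>x\<leftarrow>xs. \<Sum>y\<leftarrow>ys. f x y) = (\<Sum>y\<leftarrow>ys. \<Sum>x\<leftarrow>xs. f x y :: 'c::comm_monoid_add)"
  by (induction xs) (auto simp: sum_list_addf)

lemma sum_list_sum_swap:
  "(\<Sum>x\<leftarrow>xs. \<Sum>e\<in>F. f x e) = (\<Sum>e\<in>F. \<Sum>x\<leftarrow>xs. f x e :: 'c::comm_monoid_add)"
  by (induction xs) (auto simp: sum.distrib)

lemma k_algebra_vector_space: "k_algebra s \<Longrightarrow> vector_space s"
  by (simp add: k_algebra_def)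

lemma k_algebra_linear_mult_left: "k_algebra s \<Longrightarrow> Vector_Spaces.linear s s (\<lambda>q. x * q)"
  unfolding k_algebra_def Vector_Spaces.linear_iff by (metis distrib_left)

lemma k_algebra_linear_mult_right: "k_algebra s \<Longrightarrow> Vector_Spaces.linear s s (\<lambda>q. q * x)"
  unfolding k_algebra_def Vector_Spaces.linear_iff by (metis distrib_right)

lemma bilinear_formD:
  assumes "bilinear_form s1 s2 B"
  shows bilinear_form_linear_left: "Vector_Spaces.linear s1 (*) (\<lambda>x. B x y)"
    and bilinear_form_linear_right: "Vector_Spaces.linear s2 (*) (B x)"
  using assms unfolding bilinear_form_def by blast+

lemma tensor_eq_sym: "tensor_eq s1 s2 t u \<Longrightarrow> tensor_eq s1 s2 u t"
  by (simp add: tensor_eq_def)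

lemma tensor_eq_trans [trans]: "tensor_eq s1 s2 t u \<Longrightarrow> tensor_eq s1 s2 u v \<Longrightarrow> tensor_eq s1 s2 t v"
  by (simp add: tensor_eq_def)

lemma tensor_eq_sum_list:
  "tensor_eq s1 s2 t u \<Longrightarrow> bilinear_form s1 s2 B \<Longrightarrow> (\<Sum>(p,q)\<leftarrow>t. B p q) = (\<Sum>(p,q)\<leftarrow>u. B p q)"
  by (simp add: tensor_eq_def)

lemma tensor_eq_map:
  assumes f: "Vector_Spaces.linear s1 s1 f" and g: "Vector_Spaces.linear s2 s2 g"
    and "tensor_eq s1 s2 t u"
  shows "tensor_eq s1 s2 (map (\<lambda>(p,q). (f p, g q)) t) (map (\<lambda>(p,q). (f p, g q)) u)"
  unfolding tensor_eq_def
proof (intro allI impI)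
  fix B assume "bilinear_form s1 s2 B"
  then have "bilinear_form s1 s2 (\<lambda>p q. B (f p) (g q))"
    unfolding bilinear_form_def using linear_compose_apply[OF f] linear_compose_apply[OF g] by blast
  with assms(3) have "(\<Sum>(x,y)\<leftarrow>t. B (f x) (g y)) = (\<Sum>(x,y)\<leftarrow>u. B (f x) (g y))"
    unfolding tensor_eq_def by blast
  then show "(\<Sum>(x,y)\<leftarrow>map (\<lambda>(p,q). (f p, g q)) t. B x y) =
      (\<Sum>(x,y)\<leftarrow>map (\<lambda>(p,q). (f p, g q)) u. B x y)"
    by (simp add: o_def split_def)
qed

text \<open>Expanding the second legs in a basis of \<open>A\<close> reduces every bilinear form to forms
  \<open>(y, b) \<mapsto> \<phi>(\<psi>(b) y)\<close>.\<close>

lemma tensor_eq_Nil_if_slices_vanish: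
  fixes sA :: "'k::field \<Rightarrow> 'a::ab_group_add \<Rightarrow> 'a" and sR :: "'k \<Rightarrow> 'r::ab_group_add \<Rightarrow> 'r"
  assumes "vector_space sA"
    and slices: "\<And>\<psi>. Vector_Spaces.linear sA (*) \<psi> \<Longrightarrow> (\<Sum>(y,b)\<leftarrow>\<xi>. sR (\<psi> b) y) = 0"
  shows "tensor_eq sR sA \<xi> []"
  unfolding tensor_eq_def
proof (intro allI impI)
  interpret A: vector_space sA by fact
  fix B assume B: "bilinear_form sR sA B"
  define Bas where "Bas = A.extend_basis {}"
  have ind: "A.independent Bas" and sp: "A.span Bas = UNIV"
    unfolding Bas_def using A.independent_extend_basis A.span_extend_basis A.independent_empty
    by blast+
  define rep where "rep b = A.representation Bas b" for b
  define F where "F = (\<Union>b\<in>snd ` set \<xi>. {e. rep b e \<noteq> 0})"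
  have "finite F" unfolding F_def rep_def using A.finite_representation by auto
  have decomp: "b = (\<Sum>e\<in>F. sA (rep b e) e)" if "(y, b) \<in> set \<xi>" for y b
  proof -
    have "b = (\<Sum>e | rep b e \<noteq> 0. sA (rep b e) e)"
      unfolding rep_def using A.sum_nonzero_representation_eq[OF ind] sp by simp
    also have "\<dots> = (\<Sum>e\<in>F. sA (rep b e) e)"
      by (rule sum.mono_neutral_left[OF \<open>finite F\<close>]) (use that in \<open>force simp: F_def\<close>)+
    finally show ?thesis .
  qed
  note B1 = bilinear_form_linear_left[OF B] and B2 = bilinear_form_linear_right[OF B]
  have "(\<Sum>(y,b)\<leftarrow>\<xi>. B y b) = (\<Sum>(y,b)\<leftarrow>\<xi>. \<Sum>e\<in>F. rep b e * B y e)"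
    by (rule arg_cong[where f=sum_list], rule map_cong[OF refl], clarify,
        subst decomp, assumption, simp add: linear_apply_sum[OF B2] linear_apply_scale[OF B2])
  also have "\<dots> = (\<Sum>e\<in>F. \<Sum>(y,b)\<leftarrow>\<xi>. rep b e * B y e)"
    using sum_list_sum_swap[where f="\<lambda>z e. rep (snd z) e * B (fst z) e"] by (simp add: split_def)
  also have "\<dots> = (\<Sum>e\<in>F. B (\<Sum>(y,b)\<leftarrow>\<xi>. sR (rep b e) y) e)"
    by (simp add: linear_apply_sum_list[OF B1] linear_apply_scale[OF B1] split_def)
  also have "\<dots> = 0"
    using slices A.linear_representation[OF ind sp] by (simp add: rep_def linear_apply_zero[OF B1])
  finally show "(\<Sum>(y,b)\<leftarrow>\<xi>. B y b) = (\<Sum>(y,b)\<leftarrow>[]. B y b)" by simp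
qed

lemma tmult_single_left: "tmult [(x,y)] u = map (\<lambda>(p,q). (x * p, y * q)) u"
  by (simp add: tmult_def split_def)

lemma tmult_single_right: "tmult t [(x,y)] = map (\<lambda>(p,q). (p * x, q * y)) t"
  by (induction t) (auto simp: tmult_def)

text \<open>For the multiplier \<open>m = (DL, DR)\<close>, both sides represent \<open>(1 \<otimes> c) m (1 \<otimes> b)\<close>, bracketed
  as \<open>((1 \<otimes> c) m)(1 \<otimes> b)\<close> and \<open>(1 \<otimes> c)(m (1 \<otimes> b))\<close>. Local units \<open>e\<close>, \<open>e'\<close> turn both into the
  product \<open>(e \<otimes> e c) m (e' \<otimes> b)\<close> of honest tensors with \<open>m\<close>.\<close>

lemma multiplier_products_assoc:
  fixes s :: "'k::field \<Rightarrow> 'a::ring \<Rightarrow> 'a"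
  assumes ka: "k_algebra s"
    and mult: "\<And>t u. tensor_eq s s (tmult t (DL u)) (tmult (DR t) u)"
    and D1: "\<And>t. tensor_eq s s (DR (rm1b c t)) (tmult t D1)"
    and D2: "\<And>t. tensor_eq s s (DL (lm1b b t)) (tmult D2 t)"
    and units: "\<And>As::'a set. finite As \<Longrightarrow> \<exists>e. \<forall>x\<in>As. x * e = x \<and> e * x = x"
  shows "tensor_eq s s (rm1b b D1) (lm1b c D2)"
proof -
  obtain e where e: "\<forall>x\<in>fst ` set D1 \<union> (\<lambda>(p,q). q * b) ` set D1 \<union> fst ` set D2 \<union>
      (\<lambda>(p,q). c * q) ` set D2. x * e = x \<and> e * x = x"
    using units[of "fst ` set D1 \<union> (\<lambda>(p,q). q * b) ` set D1 \<union> fst ` set D2 \<union>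
      (\<lambda>(p,q). c * q) ` set D2"] by auto
  define W where "W = DR [(e, e * c)]"
  obtain e' where e': "\<forall>x\<in>fst ` set W \<union> fst ` set D2 \<union> snd ` set D2 \<union> {b}. x * e' = x \<and> e' * x = x"
    using units[of "fst ` set W \<union> fst ` set D2 \<union> snd ` set D2 \<union> {b}"] by auto
  have "rm1b b D1 = rm1b b (tmult [(e,e)] D1)"
  proof -
    have "(e * p, e * q * b) = (p, q * b)" if "(p,q) \<in> set D1" for p q
      using e that by (force simp: mult.assoc)
    then show ?thesis unfolding tmult_single_left rm1b_def by (auto intro!: map_cong)
  qed
  also have "tensor_eq s s \<dots> (rm1b b W)"
  proof -
    have "tensor_eq s s (tmult [(e,e)] D1) W"
      using tensor_eq_sym[OF D1[of "[(e,e)]"]] unfolding W_def rm1b_def by simp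
    then show ?thesis
      unfolding rm1b_def
      using tensor_eq_map[OF vector_space.linear_ident[OF k_algebra_vector_space[OF ka]]
          k_algebra_linear_mult_right[OF ka]] by simp
  qed
  also have "rm1b b W = tmult W [(e',b)]"
  proof -
    have "(p, q * b) = (p * e', q * b)" if "(p,q) \<in> set W" for p q
      using e' that by force
    then show ?thesis unfolding tmult_single_right rm1b_def by (auto intro!: map_cong)
  qed
  also have "tensor_eq s s \<dots> (tmult [(e, e * c)] (DL [(e',b)]))"
    unfolding W_def by (rule tensor_eq_sym[OF mult])
  also have "[(e',b)] = lm1b b [(e',e')]"
    unfolding lm1b_def using e' by simp
  also have "tensor_eq s s (tmult [(e, e * c)] (DL \<dots>)) (tmult [(e, e * c)] (tmult D2 [(e',e')]))"
    unfolding tmult_single_left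
    by (rule tensor_eq_map[OF k_algebra_linear_mult_left[OF ka] k_algebra_linear_mult_left[OF ka] D2])
  also have "tmult [(e, e * c)] (tmult D2 [(e',e')]) = lm1b c D2"
  proof -
    have "(e * (p * e'), e * c * (q * e')) = (p, c * q)" if "(p,q) \<in> set D2" for p q
    proof -
      have "p \<in> fst ` set D2" "q \<in> snd ` set D2" "c * q \<in> (\<lambda>(p,q). c * q) ` set D2"
        using that by force+
      then show ?thesis using e e' by (simp add: mult.assoc)
    qed
    then show ?thesis unfolding tmult_single_left tmult_single_right lm1b_def by (auto intro!: map_cong)
  qed
  finally show ?thesis .
qed

lemma reg_mult_hopf_D_1b:
  assumes "reg_mult_hopf sA DL DR eps S"
  shows "tensor_eq sA sA (DL a (lm1b b t)) (tmult (D_1b sA DL a b) t)"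
proof -
  have "\<forall>a b. \<exists>u. \<forall>t. tensor_eq sA sA (DL a (lm1b b t)) (tmult u t)"
    using assms unfolding reg_mult_hopf_def by (elim conjE) assumption
  then have "\<exists>u. \<forall>t. tensor_eq sA sA (DL a (lm1b b t)) (tmult u t)" by blast
  from someI_ex[OF this] show ?thesis unfolding D_1b_def by blast
qed

lemma reg_mult_hopf_D_1a:
  assumes "reg_mult_hopf sA DL DR eps S"
  shows "tensor_eq sA sA (DR a (rm1b c t)) (tmult t (D_1a sA DR c a))"
proof -
  have "\<forall>c a. \<exists>u. \<forall>t. tensor_eq sA sA (DR a (rm1b c t)) (tmult t u)"
    using assms unfolding reg_mult_hopf_def by (elim conjE) assumption
  then have "\<exists>u. \<forall>t. tensor_eq sA sA (DR a (rm1b c t)) (tmult t u)" by blast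
  from someI_ex[OF this] show ?thesis unfolding D_1a_def by blast
qed

lemma reg_mult_hopf_D_1a_D_1b:
  fixes sA :: "'k::field \<Rightarrow> 'a::ring \<Rightarrow> 'a"
  assumes hopf: "reg_mult_hopf sA DL DR eps S"
    and units: "\<And>As::'a set. finite As \<Longrightarrow> \<exists>e. \<forall>x\<in>As. x * e = x \<and> e * x = x"
  shows "tensor_eq sA sA (rm1b b (D_1a sA DR c a)) (lm1b c (D_1b sA DL a b))"
proof (rule multiplier_products_assoc[where DL="DL a" and DR="DR a"])
  show "k_algebra sA" using hopf unfolding reg_mult_hopf_def by (elim conjE)
  have "\<forall>a. is_multiplier sA (DL a) (DR a)"
    using hopf unfolding reg_mult_hopf_def by (elim conjE) assumption
  then show "tensor_eq sA sA (tmult t (DL a u)) (tmult (DR a t) u)" for t u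
    unfolding is_multiplier_def by blast
  show "tensor_eq sA sA (DR a (rm1b c t)) (tmult t (D_1a sA DR c a))" for t
    by (rule reg_mult_hopf_D_1a[OF hopf])
  show "tensor_eq sA sA (DL a (lm1b b t)) (tmult (D_1b sA DL a b) t)" for t
    by (rule reg_mult_hopf_D_1b[OF hopf])
qed (fact units)

lemma reg_mult_hopf_D_1a_surj:
  assumes "reg_mult_hopf sA DL DR eps S"
  shows "\<exists>t. tensor_eq sA sA (text_map (D_1a sA DR) t) u"
proof -
  have "tensor_bij sA (D_1a sA DR)"
    using assms unfolding reg_mult_hopf_def by (elim conjE) assumption
  then show ?thesis unfolding tensor_bij_def by blast
qed

lemma partial_module_algebra_local_units:
  fixes sA :: "'k::field \<Rightarrow> 'a::ring \<Rightarrow> 'a" and As :: "'a set"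
  assumes "partial_module_algebra sA DL DR S sR act eL eR" and "finite As"
  shows "\<exists>e. \<forall>x\<in>As. x * e = x \<and> e * x = x"
proof -
  have "\<forall>As Xs. finite As \<longrightarrow> finite Xs \<longrightarrow>
      (\<exists>b. \<forall>a\<in>As. a * b = a \<and> b * a = a \<and> (\<forall>x\<in>Xs. act a x = act a (act b x)))"
    using assms(1) unfolding partial_module_algebra_def by (elim conjE) assumption
  from this[rule_format, OF assms(2) finite.emptyI] show ?thesis by blast
qed

lemma bilinear_form_zero_if_zero_on_range:
  assumes surj: "\<And>u. \<exists>t. tensor_eq s s (text_map T t) u"
    and "bilinear_form s s \<Gamma>"
    and zero: "\<And>p q. (\<Sum>(x,y)\<leftarrow>T p q. \<Gamma> x y) = 0"
  shows "\<Gamma> e f = 0"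
proof -
  obtain t where "tensor_eq s s (text_map T t) [(e,f)]" using surj by blast
  with assms(2) have "(\<Sum>(x,y)\<leftarrow>text_map T t. \<Gamma> x y) = \<Gamma> e f"
    unfolding tensor_eq_def by auto
  moreover have "(\<Sum>(x,y)\<leftarrow>text_map T t. \<Gamma> x y) = 0"
    unfolding text_map_def using zero by (simp add: sum_list_concat_map split_def)
  ultimately show ?thesis by simp
qed

lemma sum_list_smash_mult_single:
  "(\<Sum>(u,v)\<leftarrow>smash_mult sA DL act [(x,a)] \<xi>. G u v) =
    (\<Sum>(y,b)\<leftarrow>\<xi>. \<Sum>(p,q)\<leftarrow>D_1b sA DL a b. G (x * act p y) q)"
  unfolding smash_mult_def by (simp add: sum_list_concat_map split_def o_def)

lemma smash_left_annihilator_twisted_slices: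
  fixes sA :: "'k::field \<Rightarrow> 'a::ring \<Rightarrow> 'a" and sR :: "'k \<Rightarrow> 'r::ring \<Rightarrow> 'r"
  assumes kA: "k_algebra sA" and kR: "k_algebra sR"
    and act: "\<And>y. Vector_Spaces.linear sA sR (\<lambda>a. act a y)"
    and assoc: "\<And>a b c. tensor_eq sA sA (rm1b b (D_1a sA DR c a)) (lm1b c (D_1b sA DL a b))"
    and surj: "\<And>u. \<exists>t. tensor_eq sA sA (text_map (D_1a sA DR) t) u"
    and ann: "\<And>x a. tensor_eq sR sA (smash_mult sA DL act [(x, a)] \<xi>) []"
    and B: "bilinear_form sR sA B"
  shows "(\<Sum>(y,b)\<leftarrow>\<xi>. B (x * act e y) (f * b)) = 0"
proof -
  define \<Gamma> where "\<Gamma> p q = (\<Sum>(y,b)\<leftarrow>\<xi>. B (x * act p y) (q * b))" for p q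
  note B1 = bilinear_form_linear_left[OF B] and B2 = bilinear_form_linear_right[OF B]
  have lin_act: "Vector_Spaces.linear sA (*) (\<lambda>p. B (x * act p y) q)" for y q
    by (rule linear_compose_apply[OF linear_compose_apply[OF act k_algebra_linear_mult_left[OF kR]] B1])
  have "bilinear_form sA sA \<Gamma>"
    unfolding bilinear_form_def \<Gamma>_def split_def
    by (intro conjI allI linear_sum_list[OF k_algebra_vector_space[OF kA] vector_space_field_mult]
        lin_act linear_compose_apply[OF k_algebra_linear_mult_right[OF kA] B2])
  moreover have "(\<Sum>(p,q)\<leftarrow>D_1a sA DR c a. \<Gamma> p q) = 0" for c a
  proof -
    have "(\<Sum>(p,q)\<leftarrow>D_1a sA DR c a. \<Gamma> p q) =
        (\<Sum>(y,b)\<leftarrow>\<xi>. \<Sum>(p,q)\<leftarrow>rm1b b (D_1a sA DR c a). B (x * act p y) q)"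
      unfolding \<Gamma>_def rm1b_def
      using sum_list_swap[where f="\<lambda>z w. B (x * act (fst z) (fst w)) (snd z * snd w)"]
      by (simp add: split_def o_def)
    also have "\<dots> = (\<Sum>(y,b)\<leftarrow>\<xi>. \<Sum>(p,q)\<leftarrow>lm1b c (D_1b sA DL a b). B (x * act p y) q)"
      using tensor_eq_sum_list[OF assoc] lin_act B2
      by (intro arg_cong[where f=sum_list] map_cong) (auto simp: bilinear_form_def)
    also have "\<dots> = (\<Sum>(y,b)\<leftarrow>\<xi>. \<Sum>(p,q)\<leftarrow>D_1b sA DL a b. B (x * act p y) (c * q))"
      unfolding lm1b_def by (simp add: split_def o_def)
    also have "\<dots> = 0"
    proof -
      have "bilinear_form sR sA (\<lambda>r q. B r (c * q))"
        unfolding bilinear_form_def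
        using B1 linear_compose_apply[OF k_algebra_linear_mult_left[OF kA] B2] by blast
      from ann[of x a, unfolded tensor_eq_def, rule_format, OF this] show ?thesis
        by (simp add: sum_list_smash_mult_single)
    qed
    finally show ?thesis .
  qed
  ultimately have "\<Gamma> e f = 0"
    by (rule bilinear_form_zero_if_zero_on_range[OF surj])
  then show ?thesis unfolding \<Gamma>_def .
qed

lemma smash_left_annihilator_slices:
  fixes sA :: "'k::field \<Rightarrow> 'a::ring \<Rightarrow> 'a" and sR :: "'k \<Rightarrow> 'r::ring \<Rightarrow> 'r"
  assumes hopf: "reg_mult_hopf sA DL DR eps S" and kR: "k_algebra sR"
    and pma: "partial_module_algebra sA DL DR S sR act eL eR"
    and ann: "\<And>x a. tensor_eq sR sA (smash_mult sA DL act [(x, a)] \<xi>) []"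
    and B: "bilinear_form sR sA B"
  shows "(\<Sum>(y,b)\<leftarrow>\<xi>. B (x * act e y) b) = 0"
proof -
  have kA: "k_algebra sA" using hopf unfolding reg_mult_hopf_def by (elim conjE)
  have act: "\<forall>y. Vector_Spaces.linear sA sR (\<lambda>a. act a y)"
    using pma unfolding partial_module_algebra_def by (elim conjE) assumption
  note units = partial_module_algebra_local_units[OF pma]
  obtain f where f: "\<forall>b\<in>snd ` set \<xi>. f * b = b"
    using units[of "snd ` set \<xi>"] by auto
  have "(\<Sum>(y,b)\<leftarrow>\<xi>. B (x * act e y) b) = (\<Sum>(y,b)\<leftarrow>\<xi>. B (x * act e y) (f * b))"
  proof (intro arg_cong[where f=sum_list] map_cong refl, clarify)
    fix y b assume "(y, b) \<in> set \<xi>"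
    then have "f * b = b" using f by force
    then show "B (x * act e y) b = B (x * act e y) (f * b)" by simp
  qed
  also have "\<dots> = 0"
    by (rule smash_left_annihilator_twisted_slices[OF kA kR act[rule_format]
          reg_mult_hopf_D_1a_D_1b[OF hopf units] reg_mult_hopf_D_1a_surj[OF hopf] ann B])
  finally show ?thesis .
qed

lemma tensor_eq_Nil_if_separated_slices_vanish:
  fixes sA :: "'k::field \<Rightarrow> 'a::ab_group_add \<Rightarrow> 'a" and sR :: "'k \<Rightarrow> 'r::ab_group_add \<Rightarrow> 'r"
  assumes vsA: "vector_space sA" and vsR: "vector_space sR"
    and L: "\<And>i. Vector_Spaces.linear sR sR (L i)"
    and separating: "\<And>v. (\<And>i. L i v = 0) \<Longrightarrow> v = 0"
    and slices: "\<And>B i. bilinear_form sR sA B \<Longrightarrow> (\<Sum>(y,b)\<leftarrow>\<xi>. B (L i y) b) = 0"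
  shows "tensor_eq sR sA \<xi> []"
proof (rule tensor_eq_Nil_if_slices_vanish[OF vsA])
  fix \<psi> assume \<psi>: "Vector_Spaces.linear sA (*) \<psi>"
  show "(\<Sum>(y,b)\<leftarrow>\<xi>. sR (\<psi> b) y) = 0"
  proof (rule separating, rule ccontr)
    fix i
    assume ne: "L i (\<Sum>(y,b)\<leftarrow>\<xi>. sR (\<psi> b) y) \<noteq> 0"
    obtain \<phi> where \<phi>: "Vector_Spaces.linear sR (*) \<phi>" "\<phi> (L i (\<Sum>(y,b)\<leftarrow>\<xi>. sR (\<psi> b) y)) \<noteq> 0"
      using vector_space.exists_functional_nonzero[OF vsR ne] by blast
    have bilinear: "bilinear_form sR sA (\<lambda>r b. \<phi> r * \<psi> b)"
      unfolding bilinear_form_def Vector_Spaces.linear_iff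
      using \<phi>(1) \<psi> vector_space_field_mult vsR vsA
      by (auto simp: linear_apply_add linear_apply_scale algebra_simps)
    have lin: "Vector_Spaces.linear sR (*) (\<lambda>z. \<phi> (L i z))"
      by (rule linear_compose_apply[OF L \<phi>(1)])
    have "\<phi> (L i (\<Sum>(y,b)\<leftarrow>\<xi>. sR (\<psi> b) y)) = (\<Sum>(y,b)\<leftarrow>\<xi>. \<phi> (L i y) * \<psi> b)"
      by (simp add: linear_apply_sum_list[OF lin] linear_apply_scale[OF lin] split_def mult.commute)
    also have "\<dots> = 0"
      using slices[OF bilinear] by simp
    finally show False using \<phi>(2) by contradiction
  qed
qed

theorem mainTheorem14:
  fixes sA :: "'k::field \<Rightarrow> 'a::ring \<Rightarrow> 'a"
    and DL DR :: "'a \<Rightarrow> ('a \<times> 'a) list \<Rightarrow> ('a \<times> 'a) list"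
    and eps :: "'a \<Rightarrow> 'k" and S :: "'a \<Rightarrow> 'a"
    and sR :: "'k \<Rightarrow> 'r::ring \<Rightarrow> 'r"
    and act eL eR :: "'a \<Rightarrow> 'r \<Rightarrow> 'r"
    and \<xi> :: "('r \<times> 'a) list"
  assumes "reg_mult_hopf sA DL DR eps S"
    and "k_algebra sR" and "nondeg_product TYPE('r)"
    and "partial_module_algebra sA DL DR S sR act eL eR"
    and "\<forall>x a. tensor_eq sR sA (smash_mult sA DL act [(x, a)] \<xi>) []"
  shows "tensor_eq sR sA \<xi> []"
proof (rule tensor_eq_Nil_if_separated_slices_vanish[where L="\<lambda>(x,e) v. x * act e v"])
  note pma = assms(4)[unfolded partial_module_algebra_def]
  show "vector_space sA" using assms(1) unfolding reg_mult_hopf_def k_algebra_def by (elim conjE)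
  show "vector_space sR" using assms(2) by (rule k_algebra_vector_space)
  have act: "\<forall>a. Vector_Spaces.linear sR sR (act a)"
    using pma by (elim conjE) assumption
  show "Vector_Spaces.linear sR sR ((\<lambda>(x,e) v. x * act e v) i)" for i
    using linear_compose_apply[OF act[rule_format] k_algebra_linear_mult_left[OF assms(2)]]
    by (simp add: split_def)
  show "v = 0" if "\<And>i. (\<lambda>(x,e) v. x * act e v) i v = 0" for v
  proof -
    have faithful: "\<forall>v. (\<forall>a. act a v = 0) \<longrightarrow> v = 0"
      using pma by (elim conjE) assumption
    have "\<forall>v::'r. (\<forall>x. x * v = 0) \<longrightarrow> v = 0"
      using assms(3) unfolding nondeg_product_def by blast
    moreover have "x * act e v = 0" for x e using that[of "(x, e)"] by simp
    ultimately show ?thesis using faithful by blast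
  qed
  show "(\<Sum>(y,b)\<leftarrow>\<xi>. B ((\<lambda>(x,e) v. x * act e v) i y) b) = 0" if "bilinear_form sR sA B" for B i
    using smash_left_annihilator_slices[OF assms(1,2,4) assms(5)[rule_format] that]
    by (simp add: split_def)
qed

end
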